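(* Let $e=(e_1,\dots,e_n)\in\mathbf{I}_n(201,210)$ have parameters $(p,q)$. Then there are exactly $p+q$ sequences $(e_1,\dots,e_n,k)\in\mathbf{I}_{n+1}(201,210)$, and their parameters are, as a multiset, $$(p,q+1),(p-1,q+2),\dots,(1,q+p),\ (p+1,q),\ \underbrace{(p+2,1),\dots,(p+2,1)}_{q-1}.$$
   Context: $\mathbf{I}_n=\{(e_1,\dots,e_n)\in\mathbb{N}^n:0\le e_i<i\}$. $\mathbf{I}_n(201,210)$ is the set of $e\in\mathbf{I}_n$ with no indices $i<j<k$ such that $e_j<e_k<e_i$ and no indices $i<j<k$ such that $e_i>e_j>e_k$. The parameters of $e\in\mathbf{I}_n(201,210)$ are $(p,q)$ where $p=|\{k>e_n:(e_1,\dots,e_n,k)\in\mathbf{I}_{n+1}(201,210)\}|$ and $q=|\{k\le e_n:(e_1,\dots,e_n,k)\in\mathbf{I}_{n+1}(201,210)\}|$. *)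

theory Defs
  imports Main "HOL-Library.Multiset"
begin

text \<open>Inversion sequences, stored as 0-indexed lists: the paper's e_i (1-indexed)
  is e ! (i - 1), and the condition 0 \<le> e_i < i becomes e ! j < Suc j.\<close>
definition Iseq :: "nat \<Rightarrow> nat list set" where
  "Iseq n = {e. length e = n \<and> (\<forall>j<n. e ! j < Suc j)}"

definition avoids_201_210 :: "nat list \<Rightarrow> bool" where
  "avoids_201_210 e \<longleftrightarrow>
     \<not> (\<exists>i j k. i < j \<and> j < k \<and> k < length e \<and> e ! j < e ! k \<and> e ! k < e ! i) \<and>
     \<not> (\<exists>i j k. i < j \<and> j < k \<and> k < length e \<and> e ! i > e ! j \<and> e ! j > e ! k)"

definition Iav :: "nat \<Rightarrow> nat list set" where
  "Iav n = {e \<in> Iseq n. avoids_201_210 e}"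

definition param_p :: "nat list \<Rightarrow> nat" where
  "param_p e = card {k. k > last e \<and> e @ [k] \<in> Iav (Suc (length e))}"

definition param_q :: "nat list \<Rightarrow> nat" where
  "param_q e = card {k. k \<le> last e \<and> e @ [k] \<in> Iav (Suc (length e))}"

end

theory Submission
  imports Defs
begin

text \<open>Appending x to a 201- and 210-avoiding sequence e keeps it avoiding iff every
  inversion e_i > e_j (i < j) of e has x = e_j or x \<ge> e_i. Every x \<ge> m = max e passes this
  test, and if the last entry c lies below m, the inversion formed by m and c leaves only x = c
  and x \<ge> m. Appending k \<ge> m does not change the admissible values, while appending k < m
  shrinks them to {k} \<union> [m, n+1]. Counting admissible values above and below the new last
  entry gives the parameters: the values k > c form an interval [L, n] and yield
  (n + 1 - k, q + 1 + k - L); k = c yields (p + 1, q); the q - 1 values k < c exist only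
  when c = m and each yields (p + 2, 1).\<close>

lemma mset_set_split_at:
  fixes A :: "'a::linorder set"
  assumes "finite A" "c \<in> A"
  shows "mset_set A = mset_set {a \<in> A. c < a} + {#c#} + mset_set {a \<in> A. a < c}"
proof -
  have "A = {a \<in> A. c < a} \<union> ({c} \<union> {a \<in> A. a < c})"
    using assms(2) by auto
  also have "mset_set \<dots> = mset_set {a \<in> A. c < a} + ({#c#} + mset_set {a \<in> A. a < c})"
    using assms(1) by (subst mset_set_Union) auto
  finally show ?thesis
    by (simp add: add.assoc)
qed

definition admissible :: "nat list \<Rightarrow> nat \<Rightarrow> bool" where
  "admissible e x \<longleftrightarrow> (\<forall>i j. i < j \<longrightarrow> j < length e \<longrightarrow> e ! j < e ! i \<longrightarrow> x = e ! j \<or> e ! i \<le> x)"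

lemma admissibleD:
  "admissible e x \<Longrightarrow> i < j \<Longrightarrow> j < length e \<Longrightarrow> e ! j < e ! i \<Longrightarrow> x = e ! j \<or> e ! i \<le> x"
  by (simp add: admissible_def)

lemma ex_pattern_snoc:
  "(\<exists>i j k. i < j \<and> j < k \<and> k < length (e @ [x]) \<and>
      P ((e @ [x]) ! i) ((e @ [x]) ! j) ((e @ [x]) ! k)) \<longleftrightarrow>
   (\<exists>i j k. i < j \<and> j < k \<and> k < length e \<and> P (e ! i) (e ! j) (e ! k)) \<or>
   (\<exists>i j. i < j \<and> j < length e \<and> P (e ! i) (e ! j) x)" (is "_ \<longleftrightarrow> ?rhs")
proof -
  have "(\<exists>i j k. i < j \<and> j < k \<and> k < Suc (length e) \<and>
      P ((e @ [x]) ! i) ((e @ [x]) ! j) ((e @ [x]) ! k)) \<longleftrightarrow>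
   (\<exists>i j k. i < j \<and> j < k \<and> k < length e \<and> P ((e @ [x]) ! i) ((e @ [x]) ! j) ((e @ [x]) ! k)) \<or>
   (\<exists>i j. i < j \<and> j < length e \<and> P ((e @ [x]) ! i) ((e @ [x]) ! j) ((e @ [x]) ! length e))"
    by (simp add: less_Suc_eq conj_disj_distribL conj_disj_distribR ex_disj_distrib)
  also have "\<dots> \<longleftrightarrow> ?rhs"
    by (simp add: nth_append cong: conj_cong)
  finally show ?thesis by simp
qed

lemma admissible_iff_no_pattern:
  "admissible e x \<longleftrightarrow>
     \<not> (\<exists>i j. i < j \<and> j < length e \<and> e ! j < x \<and> x < e ! i) \<and>
     \<not> (\<exists>i j. i < j \<and> j < length e \<and> e ! i > e ! j \<and> e ! j > x)"
proof -
  have "(a < b \<longrightarrow> x = a \<or> b \<le> x) \<longleftrightarrow> \<not> (a < x \<and> x < b) \<and> \<not> (b > a \<and> a > x)" for a b :: nat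
    by auto
  then show ?thesis
    unfolding admissible_def by blast
qed

lemma avoids_201_210_snoc:
  "avoids_201_210 (e @ [x]) \<longleftrightarrow> avoids_201_210 e \<and> admissible e x"
  unfolding avoids_201_210_def admissible_iff_no_pattern
    ex_pattern_snoc[of e x "\<lambda>a b c. b < c \<and> c < a"] ex_pattern_snoc[of e x "\<lambda>a b c. a > b \<and> b > c"]
  by auto

lemma admissible_snoc:
  "admissible (e @ [k]) x \<longleftrightarrow> admissible e x \<and> (\<forall>i<length e. k < e ! i \<longrightarrow> x = k \<or> e ! i \<le> x)"
  (is "_ \<longleftrightarrow> ?rhs")
proof -
  have "admissible (e @ [k]) x \<longleftrightarrow>
      (\<forall>i j. i < j \<longrightarrow> j < length e \<longrightarrow> (e @ [k]) ! j < (e @ [k]) ! i \<longrightarrow> x = (e @ [k]) ! j \<or> (e @ [k]) ! i \<le> x) \<and>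
      (\<forall>i<length e. k < (e @ [k]) ! i \<longrightarrow> x = k \<or> (e @ [k]) ! i \<le> x)"
    unfolding admissible_def by (auto simp: less_Suc_eq)
  also have "\<dots> \<longleftrightarrow> ?rhs"
    unfolding admissible_def by (simp add: nth_append)
  finally show ?thesis .
qed

lemma Iseq_snoc_iff: "e @ [k] \<in> Iseq (Suc n) \<longleftrightarrow> e \<in> Iseq n \<and> k \<le> n"
  by (auto simp: Iseq_def All_less_Suc nth_append)

lemma Iav_length: "e \<in> Iav n \<Longrightarrow> length e = n"
  by (simp add: Iav_def Iseq_def)

definition next_values :: "nat list \<Rightarrow> nat set" where
  "next_values e = {k. k \<le> length e \<and> admissible e k}"

lemma finite_next_values [simp]: "finite (next_values e)"
  by (simp add: next_values_def)

lemma Iav_snoc_iff: "e \<in> Iav n \<Longrightarrow> e @ [k] \<in> Iav (Suc n) \<longleftrightarrow> k \<in> next_values e"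
  by (auto simp: Iav_def Iseq_snoc_iff avoids_201_210_snoc next_values_def Iav_length)

lemma param_p_eq: "e \<in> Iav n \<Longrightarrow> param_p e = card {k \<in> next_values e. last e < k}"
  unfolding param_p_def by (simp add: Iav_length Iav_snoc_iff conj_commute)

lemma param_q_eq: "e \<in> Iav n \<Longrightarrow> param_q e = card {k \<in> next_values e. k \<le> last e}"
  unfolding param_q_def by (simp add: Iav_length Iav_snoc_iff conj_commute)

lemma Max_eq_nth: "e \<noteq> [] \<Longrightarrow> \<exists>m<length e. e ! m = Max (set e)"
  by (metis Max_in List.finite_set in_set_conv_nth set_empty)

lemma admissible_if_Max_le: "Max (set e) \<le> x \<Longrightarrow> admissible e x"
  unfolding admissible_def by (meson Max_ge List.finite_set nth_mem le_trans less_trans)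

lemma admissible_snoc_if_Max_le: "Max (set e) \<le> k \<Longrightarrow> admissible (e @ [k]) x \<longleftrightarrow> admissible e x"
  unfolding admissible_snoc by (meson Max_ge List.finite_set nth_mem le_trans not_le)

lemma admissible_snoc_if_less_Max:
  assumes "e \<noteq> []" "k < Max (set e)" "admissible e k"
  shows "admissible (e @ [k]) x \<longleftrightarrow> x = k \<or> Max (set e) \<le> x"
proof -
  obtain m where "m < length e" "e ! m = Max (set e)"
    using Max_eq_nth[OF assms(1)] by blast
  then show ?thesis
    unfolding admissible_snoc using assms(2,3) admissible_if_Max_le
    by (metis Max_ge List.finite_set nth_mem le_trans)
qed

lemma admissible_last:
  assumes "avoids_201_210 e" "e \<noteq> []"
  shows "admissible e (last e)"
proof -
  have "avoids_201_210 (butlast e @ [last e])"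
    using assms by simp
  then have "admissible (butlast e @ [last e]) (last e)"
    by (simp add: avoids_201_210_snoc admissible_snoc)
  then show ?thesis
    using assms(2) by simp
qed

lemma admissible_if_last_less_Max:
  assumes "e \<noteq> []" "last e < Max (set e)" "admissible e x"
  shows "x = last e \<or> Max (set e) \<le> x"
proof -
  obtain m where m: "m < length e" "e ! m = Max (set e)"
    using Max_eq_nth[OF assms(1)] by blast
  have last: "last e = e ! (length e - 1)"
    using assms(1) by (simp add: last_conv_nth)
  with m assms(2) have "m < length e - 1"
    by (cases "m = length e - 1") auto
  with assms m last have "x = e ! (length e - 1) \<or> e ! m \<le> x"
    by (intro admissibleD) auto
  with m last show ?thesis
    by simp
qed

lemma Iav_Max_less:
  assumes "e \<in> Iav n" "e \<noteq> []"
  shows "Max (set e) < n"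
proof -
  obtain m where "m < length e" "e ! m = Max (set e)"
    using Max_eq_nth[OF assms(2)] by blast
  with assms(1) show ?thesis
    by (auto simp: Iav_def Iseq_def)
qed

lemma param_p_snoc_if_Max_le:
  assumes "e \<in> Iav n" "k \<in> next_values e" "Max (set e) \<le> k"
  shows "param_p (e @ [k]) = Suc n - k"
proof -
  have "e @ [k] \<in> Iav (Suc n)"
    using assms(1,2) Iav_snoc_iff by blast
  moreover have "{x \<in> next_values (e @ [k]). k < x} = {k<..Suc n}"
    using assms(1,3) admissible_if_Max_le
    by (auto simp: next_values_def Iav_length admissible_snoc_if_Max_le)
  ultimately show ?thesis
    by (simp add: param_p_eq)
qed

lemma param_q_snoc_if_Max_le:
  assumes "e \<in> Iav n" "k \<in> next_values e" "Max (set e) \<le> k"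
  shows "param_q (e @ [k]) = card {x \<in> next_values e. x \<le> k}"
proof -
  have "e @ [k] \<in> Iav (Suc n)"
    using assms(1,2) Iav_snoc_iff by blast
  moreover have "{x \<in> next_values (e @ [k]). x \<le> k} = {x \<in> next_values e. x \<le> k}"
    using assms(2,3) by (auto simp: next_values_def admissible_snoc_if_Max_le)
  ultimately show ?thesis
    by (simp add: param_q_eq)
qed

lemma params_snoc_if_less_Max:
  assumes "e \<in> Iav n" "e \<noteq> []" "k \<in> next_values e" "k < Max (set e)"
  shows "param_p (e @ [k]) = Suc (Suc n) - Max (set e)" "param_q (e @ [k]) = 1"
proof -
  have Iav: "e @ [k] \<in> Iav (Suc n)"
    using assms(1,3) Iav_snoc_iff by blast
  have adm: "admissible (e @ [k]) x \<longleftrightarrow> x = k \<or> Max (set e) \<le> x" for x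
    using assms(2-4) admissible_snoc_if_less_Max by (simp add: next_values_def)
  have "{x \<in> next_values (e @ [k]). k < x} = {Max (set e)..Suc n}"
    using assms(1,4) Iav_Max_less[OF assms(1,2)] by (auto simp: next_values_def Iav_length adm)
  then show "param_p (e @ [k]) = Suc (Suc n) - Max (set e)"
    using Iav by (simp add: param_p_eq)
  have "{x \<in> next_values (e @ [k]). x \<le> k} = {k}"
    using assms(1,3,4) by (auto simp: next_values_def Iav_length adm)
  then show "param_q (e @ [k]) = 1"
    using Iav by (simp add: param_q_eq)
qed

definition child_params :: "nat list \<Rightarrow> nat \<Rightarrow> nat \<times> nat" where
  "child_params e k = (param_p (e @ [k]), param_q (e @ [k]))"

context
  fixes e :: "nat list" and n :: nat
  assumes e_Iav: "e \<in> Iav n" and e_nonempty: "e \<noteq> []"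
begin

lemma last_le_Max: "last e \<le> Max (set e)"
  using e_nonempty by simp

lemma last_in_next_values: "last e \<in> next_values e"
proof -
  have "admissible e (last e)"
    using e_Iav e_nonempty admissible_last by (simp add: Iav_def)
  with last_le_Max Iav_Max_less[OF e_Iav e_nonempty] show ?thesis
    by (simp add: next_values_def Iav_length[OF e_Iav])
qed

lemma next_values_above_last:
  "{k \<in> next_values e. last e < k} = {max (Suc (last e)) (Max (set e))..n}"
proof (intro set_eqI iffI)
  fix k
  assume "k \<in> {k \<in> next_values e. last e < k}"
  then have k: "k \<le> n" "admissible e k" "last e < k"
    by (auto simp: next_values_def Iav_length[OF e_Iav])
  have "Max (set e) \<le> k"
  proof (cases "last e < Max (set e)")
    case True
    then show ?thesis
      using k admissible_if_last_less_Max[OF e_nonempty] by fastforce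
  qed (use k in simp)
  with k show "k \<in> {max (Suc (last e)) (Max (set e))..n}"
    by simp
next
  fix k
  assume "k \<in> {max (Suc (last e)) (Max (set e))..n}"
  then show "k \<in> {k \<in> next_values e. last e < k}"
    using admissible_if_Max_le by (simp add: next_values_def Iav_length[OF e_Iav])
qed

lemma next_values_below_last:
  "last e < Max (set e) \<Longrightarrow> {k \<in> next_values e. k < last e} = {}"
  using admissible_if_last_less_Max[OF e_nonempty] by (fastforce simp: next_values_def)

lemma param_p_eq_interval: "param_p e = Suc n - max (Suc (last e)) (Max (set e))"
  using param_p_eq[OF e_Iav] next_values_above_last by simp

lemma param_q_eq_Suc_card: "param_q e = Suc (card {k \<in> next_values e. k < last e})"
proof -
  have "{k \<in> next_values e. k \<le> last e} = insert (last e) {k \<in> next_values e. k < last e}"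
    using last_in_next_values by auto
  then show ?thesis
    using param_q_eq[OF e_Iav] by simp
qed

lemma card_next_values_atMost:
  assumes "max (Suc (last e)) (Max (set e)) \<le> k" "k \<le> n"
  shows "card {x \<in> next_values e. x \<le> k} = param_q e + (Suc k - max (Suc (last e)) (Max (set e)))"
proof -
  let ?L = "max (Suc (last e)) (Max (set e))"
  have "{x \<in> next_values e. x \<le> k} = {x \<in> next_values e. x \<le> last e} \<union> {x \<in> {x \<in> next_values e. last e < x}. x \<le> k}"
    using assms(1) by auto
  also have "\<dots> = {x \<in> next_values e. x \<le> last e} \<union> {?L..k}"
    unfolding next_values_above_last using assms(2) by auto
  also have "card \<dots> = card {x \<in> next_values e. x \<le> last e} + card {?L..k}"
    by (rule card_Un_disjoint) auto
  finally show ?thesis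
    using param_q_eq[OF e_Iav] by simp
qed

lemma image_child_params_above_last:
  "image_mset (child_params e) (mset_set {k \<in> next_values e. last e < k})
     = mset (map (\<lambda>i. (param_p e - i, param_q e + 1 + i)) [0..<param_p e])"
proof -
  let ?L = "max (Suc (last e)) (Max (set e))"
  have L_le: "?L \<le> Suc n"
    using Iav_Max_less[OF e_Iav e_nonempty] last_le_Max by simp
  have "mset_set {k \<in> next_values e. last e < k} = mset [?L..<Suc n]"
    by (simp only: next_values_above_last mset_upt atLeastLessThanSuc_atLeastAtMost)
  also have "[?L..<Suc n] = map (\<lambda>i. i + ?L) [0..<param_p e]"
    using L_le by (simp add: map_add_upt param_p_eq_interval)
  finally have "image_mset (child_params e) (mset_set {k \<in> next_values e. last e < k})
      = mset (map (child_params e \<circ> (\<lambda>i. i + ?L)) [0..<param_p e])"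
    by (simp add: image_mset.compositionality)
  also have "map (child_params e \<circ> (\<lambda>i. i + ?L)) [0..<param_p e]
      = map (\<lambda>i. (param_p e - i, param_q e + 1 + i)) [0..<param_p e]"
  proof (rule map_cong[OF refl])
    fix i
    assume "i \<in> set [0..<param_p e]"
    then have "i < param_p e"
      by simp
    have bounds: "?L \<le> i + ?L" "i + ?L \<le> n"
      using \<open>i < param_p e\<close> L_le by (simp_all add: param_p_eq_interval)
    then have "i + ?L \<in> {k \<in> next_values e. last e < k}"
      unfolding next_values_above_last by simp
    then have "i + ?L \<in> next_values e"
      by simp
    moreover have "Max (set e) \<le> i + ?L"
      using bounds by simp
    ultimately show "(child_params e \<circ> (\<lambda>i. i + ?L)) i = (param_p e - i, param_q e + 1 + i)"
      using card_next_values_atMost[OF bounds]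
      by (simp add: child_params_def param_p_snoc_if_Max_le[OF e_Iav] param_q_snoc_if_Max_le[OF e_Iav]
          param_p_eq_interval)
  qed
  finally show ?thesis .
qed

lemma child_params_last: "child_params e (last e) = (param_p e + 1, param_q e)"
proof (cases "last e < Max (set e)")
  case True
  then show ?thesis
    using Iav_Max_less[OF e_Iav e_nonempty] params_snoc_if_less_Max[OF e_Iav e_nonempty last_in_next_values]
    by (simp add: child_params_def param_p_eq_interval param_q_eq_Suc_card next_values_below_last)
next
  case False
  then have "Max (set e) \<le> last e"
    by simp
  then show ?thesis
    using e_Iav Iav_Max_less[OF e_Iav e_nonempty] last_in_next_values last_le_Max
    by (simp add: child_params_def param_p_snoc_if_Max_le param_q_snoc_if_Max_le
        param_p_eq_interval param_q_eq)
qed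

lemma image_child_params_below_last:
  "image_mset (child_params e) (mset_set {k \<in> next_values e. k < last e})
     = replicate_mset (param_q e - 1) (param_p e + 2, 1)"
proof (cases "last e < Max (set e)")
  case True
  then show ?thesis
    by (simp add: next_values_below_last param_q_eq_Suc_card)
next
  case False
  then have last_eq: "last e = Max (set e)"
    using last_le_Max by simp
  have "child_params e k = (param_p e + 2, 1)" if "k \<in> next_values e" "k < last e" for k
    using that last_eq Iav_Max_less[OF e_Iav e_nonempty] params_snoc_if_less_Max[OF e_Iav e_nonempty]
    by (simp add: child_params_def param_p_eq_interval)
  then have "image_mset (child_params e) (mset_set {k \<in> next_values e. k < last e})
      = image_mset (\<lambda>_. (param_p e + 2, 1)) (mset_set {k \<in> next_values e. k < last e})"
    by (intro image_mset_cong) simp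
  then show ?thesis
    by (simp add: image_mset_const_eq param_q_eq_Suc_card)
qed

end

theorem lemma4p5:
  fixes e :: "nat list" and n p q :: nat
  assumes "n \<ge> 1" and "e \<in> Iav n"
    and "p = param_p e" and "q = param_q e"
  shows "card {k. e @ [k] \<in> Iav (Suc n)} = p + q \<and>
         image_mset (\<lambda>k. (param_p (e @ [k]), param_q (e @ [k])))
                    (mset_set {k. e @ [k] \<in> Iav (Suc n)})
         = mset (map (\<lambda>i. (p - i, q + 1 + i)) [0..<p]) + {#(p + 1, q)#}
           + replicate_mset (q - 1) (p + 2, 1)"
proof -
  have nonempty: "e \<noteq> []"
    using assms(1,2) Iav_length by fastforce
  have children: "{k. e @ [k] \<in> Iav (Suc n)} = next_values e"
    by (simp add: Iav_snoc_iff[OF assms(2)])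
  have split: "mset_set (next_values e) = mset_set {k \<in> next_values e. last e < k} + {#last e#}
      + mset_set {k \<in> next_values e. k < last e}"
    using last_in_next_values[OF assms(2) nonempty] by (simp add: mset_set_split_at)
  have "card (next_values e) = p + q"
    using arg_cong[OF split, of size] assms(3,4)
    by (simp add: param_p_eq[OF assms(2)] param_q_eq_Suc_card[OF assms(2) nonempty])
  moreover have "image_mset (child_params e) (mset_set (next_values e))
      = mset (map (\<lambda>i. (p - i, q + 1 + i)) [0..<p]) + {#(p + 1, q)#} + replicate_mset (q - 1) (p + 2, 1)"
    unfolding split assms(3,4)
    using image_child_params_above_last[OF assms(2) nonempty] child_params_last[OF assms(2) nonempty]
      image_child_params_below_last[OF assms(2) nonempty]
    by (simp add: add_mset_commute)
  ultimately show ?thesis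
    by (simp add: children child_params_def[abs_def])
qed

end
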